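(* For integers $k\ge1$ and $q\ge2$, \[ \sum_{n=1}^\infty\frac{P_k(H_n,H_n^{(2)},\dots,H_n^{(k)})}{n(n+1)\cdots(n+q-1)}=\frac{1}{(q-1)!}\Big[\zeta(k+1)-\sum_{j=1}^{q-2}\frac{1}{j^{k+1}}\Big]. \]
   Context: For integers $r\ge1$ and $n\ge0$, $H_n^{(r)}=\sum_{j=1}^n j^{-r}$ and $H_n=H_n^{(1)}$. For $n\ge1$, $P_n(y_1,\dots,y_n)=\sum_{m_1+2m_2+\cdots=n}\frac{(-1)^{m_2+m_4+\cdots}}{m_1!m_2!\cdots}\prod_{i\ge1}(y_i/i)^{m_i}$. $\zeta$ is the Riemann zeta function. *)

theory Defs
  imports "HOL-Analysis.Analysis"
begin

definition gen_harm :: "nat \<Rightarrow> nat \<Rightarrow> real" where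
  "gen_harm r n = (\<Sum>j=1..n. 1 / (real j) ^ r)"

text \<open>Riemann zeta at an integer s (meant for s \<ge> 2), via its defining series.\<close>
definition zeta_nat :: "nat \<Rightarrow> real" where
  "zeta_nat s = (\<Sum>j. 1 / (real (Suc j)) ^ s)"

definition partition_vecs :: "nat \<Rightarrow> (nat \<Rightarrow> nat) set" where
  "partition_vecs n = {m. (\<forall>i. (i < 1 \<or> n < i) \<longrightarrow> m i = 0) \<and> (\<Sum>i=1..n. i * m i) = n}"

definition Pn :: "nat \<Rightarrow> (nat \<Rightarrow> real) \<Rightarrow> real" where
  "Pn n y = (\<Sum>m\<in>partition_vecs n.
      (-1) ^ (\<Sum>i\<in>{i\<in>{1..n}. even i}. m i) / (\<Prod>i=1..n. fact (m i))
      * (\<Prod>i=1..n. (y i / real i) ^ (m i)))"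

end

theory Submission
  imports Defs
begin

text \<open>
  Evaluated at the power sums p_r = H_n^(r) of 1, 1/2, ..., 1/n, the polynomial P_k is the
  elementary symmetric function e_k(1, 1/2, ..., 1/n): both obey Newton's recurrence
  k P_k = sum_j (-1)^(j-1) p_j P_(k-j).
  Summation by parts, with 1/(a)_r - 1/(a+1)_r = r/(a)_(r+1) for the rising factorial (a)_r and
  e_k(n+1) = e_k(n) + e_(k-1)(n)/(n+1), shows by induction on k that
  sum_n e_k(n)/(n+1)_(r+1) = 1/(r! r^(k+1)); the boundary term e_k(n)/(n+2)_r converges, and
  its limit is 0 because divided by n+1 it is the summand of a convergent series.
  For the series S_q = sum_n e_k(n)/(n)_q the same partial fractions then give
  (q-1)! S_q - q! S_(q+1) = (q-1)^-(k+1), and as (q-1)! S_q -> 0, telescoping in q shows that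
  (q-1)! S_q is the tail sum_(j >= q-1) j^-(k+1) of zeta(k+1).
\<close>

lemma partition_vecs_vanish:
  assumes "m \<in> partition_vecs n" and "i \<notin> {1..n}"
  shows "m i = 0"
  using assms unfolding partition_vecs_def by (auto simp: not_le)

lemma partition_vecs_le:
  assumes "m \<in> partition_vecs n" and "i \<in> {1..n}"
  shows "i * m i \<le> n"
proof -
  have "i * m i \<le> (\<Sum>i=1..n. i * m i)" by (rule member_le_sum) (use assms(2) in auto)
  then show ?thesis using assms(1) by (simp add: partition_vecs_def)
qed

lemma finite_partition_vecs: "finite (partition_vecs n)"
proof (rule finite_subset)
  show "partition_vecs n \<subseteq> {m. \<forall>i. (i \<in> {1..n} \<longrightarrow> m i \<in> {..n}) \<and> (i \<notin> {1..n} \<longrightarrow> m i = 0)}"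
  proof (intro subsetI CollectI allI conjI impI)
    fix m i assume m: "m \<in> partition_vecs n"
    show "m i \<in> {..n}" if i: "i \<in> {1..n}"
    proof -
      have "m i \<le> i * m i" using i by simp
      also have "\<dots> \<le> n" using partition_vecs_le[OF m i] .
      finally show ?thesis by simp
    qed
    show "m i = 0" if "i \<notin> {1..n}"
      using m that by (rule partition_vecs_vanish)
  qed
qed (intro finite_set_of_finite_funs; simp)

lemma partition_vecs_iff:
  assumes "\<And>i. i \<notin> {1..N} \<Longrightarrow> m i = 0" and "n \<le> N"
  shows "m \<in> partition_vecs n \<longleftrightarrow> (\<Sum>i=1..N. i * m i) = n"
proof
  assume m: "m \<in> partition_vecs n"
  have "(\<Sum>i=1..N. i * m i) = (\<Sum>i=1..n. i * m i)"
    by (rule sum.mono_neutral_right) (use assms(2) m in \<open>auto simp: partition_vecs_def\<close>)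
  then show "(\<Sum>i=1..N. i * m i) = n" using m by (simp add: partition_vecs_def)
next
  assume sum: "(\<Sum>i=1..N. i * m i) = n"
  have beyond: "m i = 0" if "n < i" for i
  proof (cases "i \<le> N")
    case True
    have "i * m i \<le> n" unfolding sum[symmetric] by (rule member_le_sum) (use that True in auto)
    then show ?thesis using that by (cases "m i") auto
  qed (use assms(1) in auto)
  have "(\<Sum>i=1..N. i * m i) = (\<Sum>i=1..n. i * m i)"
    by (rule sum.mono_neutral_right) (use assms(2) beyond in auto)
  then show "m \<in> partition_vecs n" using sum assms(1) beyond by (auto simp: partition_vecs_def)
qed

lemma sum_fun_upd:
  fixes h :: "'a \<Rightarrow> 'b::comm_monoid_add"
  assumes "finite A" and "j \<in> A"
  shows "sum (h(j := w)) A + h j = sum h A + w"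
proof -
  have "sum (h(j := w)) (A - {j}) = sum h (A - {j})" by (rule sum.cong) auto
  then show ?thesis using sum.remove[OF assms, of h] sum.remove[OF assms, of "h(j := w)"]
    by (simp add: ac_simps)
qed

lemma partition_vecs_add_part:
  assumes j: "j \<in> {1..n}" and m: "m \<in> partition_vecs (n - j)"
  shows "m(j := Suc (m j)) \<in> partition_vecs n"
proof -
  have m_vanish: "m i = 0" if "i \<notin> {1..n}" for i
    using that by (intro partition_vecs_vanish[OF m]) auto
  have m_sum: "(\<Sum>i=1..n. i * m i) = n - j"
    using partition_vecs_iff[OF m_vanish diff_le_self] m by simp
  have upd: "(\<lambda>i. i * (m(j := Suc (m j))) i) = (\<lambda>i. i * m i)(j := j * Suc (m j))"
    by auto
  have "(\<Sum>i=1..n. i * (m(j := Suc (m j))) i) + j * m j = (\<Sum>i=1..n. i * m i) + j * Suc (m j)"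
    unfolding upd by (rule sum_fun_upd) (use j in auto)
  then have "(\<Sum>i=1..n. i * (m(j := Suc (m j))) i) = n"
    using m_sum j by simp
  moreover have "(m(j := Suc (m j))) i = 0" if "i \<notin> {1..n}" for i
    using that j m_vanish[OF that] by auto
  ultimately show ?thesis
    using partition_vecs_iff[where m="m(j := Suc (m j))" and n=n and N=n] by blast
qed

lemma partition_vecs_remove_part:
  assumes j: "j \<in> {1..n}" and m: "m \<in> partition_vecs n" and mj: "m j \<ge> 1"
  shows "m(j := m j - 1) \<in> partition_vecs (n - j)"
proof -
  have upd: "(\<lambda>i. i * (m(j := m j - 1)) i) = (\<lambda>i. i * m i)(j := j * (m j - 1))"
    by auto
  have "(\<Sum>i=1..n. i * (m(j := m j - 1)) i) + j * m j = (\<Sum>i=1..n. i * m i) + j * (m j - 1)"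
    unfolding upd by (rule sum_fun_upd) (use j in auto)
  moreover have "j * m j = j * (m j - 1) + j"
    using mj by (cases "m j") auto
  moreover have "(\<Sum>i=1..n. i * m i) = n"
    using m by (simp add: partition_vecs_def)
  ultimately have "(\<Sum>i=1..n. i * (m(j := m j - 1)) i) = n - j"
    by linarith
  moreover have "(m(j := m j - 1)) i = 0" if "i \<notin> {1..n}" for i
    using that j partition_vecs_vanish[OF m that] by auto
  ultimately show ?thesis
    using partition_vecs_iff[where m="m(j := m j - 1)" and n="n - j" and N=n] by simp
qed

definition partition_weight :: "nat \<Rightarrow> (nat \<Rightarrow> real) \<Rightarrow> (nat \<Rightarrow> nat) \<Rightarrow> real" where
  "partition_weight n y m = (\<Prod>i=1..n. ((-1) ^ (i - 1) * y i / real i) ^ m i / fact (m i))"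

lemma Pn_eq_sum_partition_weight:
  "Pn n y = (\<Sum>m\<in>partition_vecs n. partition_weight n y m)"
  unfolding Pn_def
proof (rule sum.cong[OF refl])
  fix m :: "nat \<Rightarrow> nat"
  have "(-1::real) ^ (\<Sum>i\<in>{i\<in>{1..n}. even i}. m i) = (\<Prod>i\<in>{i\<in>{1..n}. even i}. (-1) ^ m i)"
    by (rule power_sum)
  also have "\<dots> = (\<Prod>i=1..n. ((-1) ^ (i - 1)) ^ m i)"
    by (subst prod.inter_filter) (auto intro!: prod.cong simp: power_minus1_odd)
  finally have sign: "(-1::real) ^ (\<Sum>i\<in>{i\<in>{1..n}. even i}. m i)
      = (\<Prod>i=1..n. ((-1) ^ (i - 1)) ^ m i)" .
  show "(-1) ^ (\<Sum>i\<in>{i\<in>{1..n}. even i}. m i) / (\<Prod>i=1..n. fact (m i))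
      * (\<Prod>i=1..n. (y i / real i) ^ m i) = partition_weight n y m"
    unfolding partition_weight_def sign prod_dividef
    by (simp add: prod.distrib[symmetric] power_mult_distrib power_divide)
qed

lemma partition_weight_mono_neutral:
  assumes "\<And>i. n < i \<Longrightarrow> m i = 0" and "n \<le> N"
  shows "partition_weight N y m = partition_weight n y m"
  unfolding partition_weight_def
  by (rule prod.mono_neutral_right) (use assms in auto)

lemma partition_weight_add_part:
  assumes j: "j \<in> {1..n}" and m: "m \<in> partition_vecs (n - j)"
  shows "real j * real (Suc (m j)) * partition_weight n y (m(j := Suc (m j)))
    = (-1) ^ (j - 1) * y j * partition_weight (n - j) y m"
proof -
  define c where "c i = (-1) ^ (i - 1) * y i / real i" for i
  define w where "w i k = c i ^ k / fact k" for i k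
  have weight: "partition_weight n y m' = w j (m' j) * (\<Prod>i\<in>{1..n} - {j}. w i (m' i))" for m'
    unfolding partition_weight_def c_def w_def using j by (simp add: prod.remove)
  have rest: "(\<Prod>i\<in>{1..n} - {j}. w i ((m(j := Suc (m j))) i))
      = (\<Prod>i\<in>{1..n} - {j}. w i (m i))"
    by (rule prod.cong) auto
  have step: "real j * real (Suc k) * w j (Suc k) = (-1) ^ (j - 1) * y j * w j k" for k
  proof -
    have "real j * real (Suc k) * w j (Suc k) = real j * c j * w j k"
      by (simp add: w_def fact_Suc)
    also have "real j * c j = (-1) ^ (j - 1) * y j"
      using j by (simp add: c_def)
    finally show ?thesis .
  qed
  have "real j * real (Suc (m j)) * partition_weight n y (m(j := Suc (m j)))
      = (-1) ^ (j - 1) * y j * partition_weight n y m"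
    by (simp only: weight rest fun_upd_same mult.assoc[symmetric] step)
  also have "partition_weight n y m = partition_weight (n - j) y m"
    by (rule partition_weight_mono_neutral) (use partition_vecs_vanish[OF m] in auto)
  finally show ?thesis .
qed

lemma Pn_recurrence:
  "real n * Pn n y = (\<Sum>j=1..n. (-1) ^ (j - 1) * y j * Pn (n - j) y)"
proof -
  have "real n * Pn n y
      = (\<Sum>m\<in>partition_vecs n. \<Sum>j=1..n. real j * real (m j) * partition_weight n y m)"
  proof -
    have "real n = (\<Sum>j=1..n. real j * real (m j))" if "m \<in> partition_vecs n" for m
      using that by (simp add: partition_vecs_def flip: of_nat_mult of_nat_sum)
    then show ?thesis
      by (simp add: Pn_eq_sum_partition_weight sum_distrib_left sum_distrib_right)
  qed
  also have "\<dots>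
      = (\<Sum>j=1..n. \<Sum>m\<in>partition_vecs n. real j * real (m j) * partition_weight n y m)"
    by (rule sum.swap)
  also have "\<dots> = (\<Sum>j=1..n. (-1) ^ (j - 1) * y j * Pn (n - j) y)"
  proof (rule sum.cong[OF refl])
    fix j assume j: "j \<in> {1..n}"
    have "(\<Sum>m\<in>partition_vecs n. real j * real (m j) * partition_weight n y m)
        = (\<Sum>m\<in>{m\<in>partition_vecs n. m j \<ge> 1}. real j * real (m j) * partition_weight n y m)"
      by (rule sum.mono_neutral_right) (auto simp: finite_partition_vecs)
    also have "\<dots>
        = (\<Sum>m\<in>partition_vecs (n - j). (-1) ^ (j - 1) * y j * partition_weight (n - j) y m)"
      by (rule sym, rule sum.reindex_bij_witness[of _ "\<lambda>m. m(j := m j - 1)"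
            "\<lambda>m. m(j := Suc (m j))"])
        (use j partition_vecs_add_part partition_vecs_remove_part partition_weight_add_part
          in \<open>auto simp del: One_nat_def\<close>)
    also have "\<dots> = (-1) ^ (j - 1) * y j * Pn (n - j) y"
      by (simp add: Pn_eq_sum_partition_weight sum_distrib_left)
    finally show "(\<Sum>m\<in>partition_vecs n. real j * real (m j) * partition_weight n y m)
        = (-1) ^ (j - 1) * y j * Pn (n - j) y" .
  qed
  finally show ?thesis .
qed

lemma Pn_0: "Pn 0 y = 1"
proof -
  have "partition_vecs 0 = {\<lambda>_. 0}" by (auto simp: partition_vecs_def)
  then show ?thesis by (simp add: Pn_def)
qed

fun esym :: "(nat \<Rightarrow> 'a::comm_ring_1) \<Rightarrow> nat \<Rightarrow> nat \<Rightarrow> 'a" where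
  "esym x 0 m = 1"
| "esym x (Suc k) 0 = 0"
| "esym x (Suc k) (Suc m) = esym x (Suc k) m + x (Suc m) * esym x k m"

lemma esym_0_right: "esym x k 0 = (if k = 0 then 1 else 0)"
  by (cases k) simp_all

lemma esym_nonneg:
  fixes x :: "nat \<Rightarrow> 'a::linordered_idom"
  assumes "\<And>i. 0 \<le> x i"
  shows "0 \<le> esym x k m"
  using assms
  by (induction x k m rule: esym.induct) (auto intro!: add_nonneg_nonneg mult_nonneg_nonneg)

definition psum :: "(nat \<Rightarrow> 'a::comm_ring_1) \<Rightarrow> nat \<Rightarrow> nat \<Rightarrow> 'a" where
  "psum x r m = (\<Sum>i=1..m. x i ^ r)"

lemma psum_Suc: "psum x r (Suc m) = psum x r m + x (Suc m) ^ r"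
  by (simp add: psum_def)

lemma fps_esym_Suc:
  "Abs_fps (\<lambda>k. esym x k (Suc m))
    = (1 + fps_const (x (Suc m)) * fps_X) * Abs_fps (\<lambda>k. esym x k m)"
proof (rule fps_ext)
  fix k show "fps_nth (Abs_fps (\<lambda>k. esym x k (Suc m))) k
      = fps_nth ((1 + fps_const (x (Suc m)) * fps_X) * Abs_fps (\<lambda>k. esym x k m)) k"
    by (cases k) (simp_all add: distrib_right mult.assoc)
qed

lemma fps_geometric_mult_inverse:
  "Abs_fps (\<lambda>i. (- c) ^ i) * (1 + fps_const c * fps_X) = (1 :: 'a::comm_ring_1 fps)"
proof -
  have "Abs_fps (\<lambda>i. (- c) ^ i) * (1 + fps_const c * fps_X)
      = Abs_fps (\<lambda>i. (- c) ^ i) + fps_const c * (fps_X * Abs_fps (\<lambda>i. (- c) ^ i))"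
    by (simp add: algebra_simps)
  also have "\<dots> = 1"
  proof (rule fps_ext)
    fix n show "fps_nth (Abs_fps (\<lambda>i. (- c) ^ i) + fps_const c * (fps_X * Abs_fps (\<lambda>i. (- c) ^ i))) n
        = fps_nth 1 n"
      by (cases n) simp_all
  qed
  finally show ?thesis .
qed

lemma fps_deriv_esym:
  "fps_deriv (Abs_fps (\<lambda>k. esym x k m))
    = Abs_fps (\<lambda>j. (-1) ^ j * psum x (Suc j) m) * Abs_fps (\<lambda>k. esym x k m)"
proof (induction m)
  case 0
  have "Abs_fps (\<lambda>k. esym x k 0) = 1"
    by (rule fps_ext) (simp add: esym_0_right)
  moreover have "Abs_fps (\<lambda>j. (-1) ^ j * psum x (Suc j) 0) = 0"
    by (rule fps_ext) (simp add: psum_def)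
  ultimately show ?case by simp
next
  case (Suc m)
  define c where "c = x (Suc m)"
  define E where "E = Abs_fps (\<lambda>k. esym x k m)"
  define Q where "Q = Abs_fps (\<lambda>j. (-1) ^ j * psum x (Suc j) m)"
  have inv: "Abs_fps (\<lambda>i. (- c) ^ i) * (1 + fps_const c * fps_X) = 1"
    by (rule fps_geometric_mult_inverse)
  have Q_Suc: "Abs_fps (\<lambda>j. (-1) ^ j * psum x (Suc j) (Suc m))
      = Q + fps_const c * Abs_fps (\<lambda>i. (- c) ^ i)"
  proof (rule fps_ext)
    fix j
    have "c * (- c) ^ j = (-1) ^ j * c ^ Suc j"
      unfolding power_minus[of c j] by (simp add: ac_simps)
    then show "fps_nth (Abs_fps (\<lambda>j. (-1) ^ j * psum x (Suc j) (Suc m))) j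
        = fps_nth (Q + fps_const c * Abs_fps (\<lambda>i. (- c) ^ i)) j"
      by (simp add: Q_def c_def psum_Suc distrib_left)
  qed
  have "fps_deriv ((1 + fps_const c * fps_X) * E) = fps_const c * E + (1 + fps_const c * fps_X) * (Q * E)"
    using Suc.IH unfolding E_def[symmetric] Q_def[symmetric] by (simp add: algebra_simps)
  also have "\<dots> = Q * ((1 + fps_const c * fps_X) * E)
      + fps_const c * (Abs_fps (\<lambda>i. (- c) ^ i) * (1 + fps_const c * fps_X)) * E"
    by (subst inv) (simp add: algebra_simps)
  also have "\<dots> = (Q + fps_const c * Abs_fps (\<lambda>i. (- c) ^ i)) * ((1 + fps_const c * fps_X) * E)"
    by (simp add: algebra_simps)
  finally show ?case
    unfolding fps_esym_Suc Q_Suc c_def[symmetric] E_def[symmetric] .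
qed

lemma esym_newton:
  "of_nat (Suc k) * esym x (Suc k) m
    = (\<Sum>j=1..Suc k. (-1) ^ (j - 1) * psum x j m * esym x (Suc k - j) m)"
proof -
  have "of_nat (Suc k) * esym x (Suc k) m = fps_nth (fps_deriv (Abs_fps (\<lambda>k. esym x k m))) k"
    by (simp add: mult.commute)
  also have "\<dots> = (\<Sum>i=0..k. (-1) ^ i * psum x (Suc i) m * esym x (k - i) m)"
    by (simp only: fps_deriv_esym) (simp add: fps_mult_nth mult.assoc)
  also have "\<dots> = (\<Sum>j=1..Suc k. (-1) ^ (j - 1) * psum x j m * esym x (Suc k - j) m)"
    unfolding One_nat_def sum.shift_bounds_cl_Suc_ivl by simp
  finally show ?thesis .
qed

lemma Pn_psum_eq_esym: "Pn k (\<lambda>r. psum x r m) = esym x k m"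
proof (induction k rule: less_induct)
  case (less k)
  show ?case
  proof (cases k)
    case 0
    then show ?thesis by (simp add: Pn_0)
  next
    case (Suc k')
    have "real k * Pn k (\<lambda>r. psum x r m)
        = (\<Sum>j=1..k. (-1) ^ (j - 1) * psum x j m * Pn (k - j) (\<lambda>r. psum x r m))"
      by (rule Pn_recurrence)
    also have "\<dots> = (\<Sum>j=1..k. (-1) ^ (j - 1) * psum x j m * esym x (k - j) m)"
      by (rule sum.cong) (use Suc less.IH in auto)
    also have "\<dots> = real k * esym x k m"
      using esym_newton[of k' x m] Suc by simp
    finally show ?thesis using Suc by simp
  qed
qed

lemma pochhammer_ge_one:
  fixes a :: "'a::linordered_semidom"
  assumes "1 \<le> a"
  shows "1 \<le> pochhammer a n"
  unfolding pochhammer_prod using assms by (intro prod_ge_1) (auto intro: add_increasing2)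

lemma inverse_pochhammer_diff:
  fixes a :: real
  assumes "0 < a"
  shows "1 / pochhammer a r - 1 / pochhammer (a + 1) r = real r / pochhammer a (Suc r)"
proof -
  have pos: "0 < pochhammer a r" "0 < pochhammer (a + 1) r"
    using assms by (simp_all add: pochhammer_pos)
  have "real r / pochhammer a (Suc r) = (a + real r) / pochhammer a (Suc r) - a / pochhammer a (Suc r)"
    by (simp add: diff_divide_distrib[symmetric])
  also have "(a + real r) / pochhammer a (Suc r) = 1 / pochhammer a r"
    using pos assms by (simp add: pochhammer_Suc)
  also have "a / pochhammer a (Suc r) = 1 / pochhammer (a + 1) r"
    using pos assms by (simp add: pochhammer_rec)
  finally show ?thesis ..
qed

lemma inverse_pochhammer_tendsto_zero:
  assumes "1 \<le> r"
  shows "(\<lambda>n. 1 / pochhammer (real (Suc n)) r) \<longlonglongrightarrow> 0"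
proof (rule tendsto_sandwich[of "\<lambda>_. 0" _ _ "\<lambda>n. 1 / real (Suc n)"])
  have "real (Suc n) \<le> pochhammer (real (Suc n)) r" for n
  proof -
    obtain r' where "r = Suc r'" using assms by (cases r) auto
    moreover have "1 \<le> pochhammer (real (Suc n) + 1) r'"
      by (rule pochhammer_ge_one) simp
    ultimately show ?thesis
      by (simp add: pochhammer_rec)
  qed
  then show "\<forall>\<^sub>F n in sequentially. 1 / pochhammer (real (Suc n)) r \<le> 1 / real (Suc n)"
    by (auto intro!: always_eventually frac_le)
  show "(\<lambda>n. 1 / real (Suc n)) \<longlonglongrightarrow> 0"
    by (rule LIMSEQ_Suc[OF lim_const_over_n])
qed (auto intro!: always_eventually simp: pochhammer_pos less_imp_le)

lemma tendsto_zero_if_summable_divide_Suc: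
  fixes b :: "nat \<Rightarrow> real"
  assumes nonneg: "\<And>n. 0 \<le> b n" and lim: "b \<longlonglongrightarrow> L"
    and summable: "summable (\<lambda>n. b n / real (Suc n))"
  shows "L = 0"
proof (rule ccontr)
  assume "L \<noteq> 0"
  moreover have "0 \<le> L"
    using nonneg by (intro LIMSEQ_le_const[OF lim]) auto
  ultimately have L: "0 < L" by simp
  have "\<forall>\<^sub>F n in sequentially. L / 2 < b n"
    using L by (intro order_tendstoD(1)[OF lim]) simp
  then have "\<forall>\<^sub>F n in sequentially. norm (inverse (real (Suc n))) \<le> 2 / L * (b n / real (Suc n))"
  proof eventually_elim
    case (elim n)
    have "inverse (real (Suc n)) = 2 / L * (L / 2 / real (Suc n))"
      using L by (simp add: field_simps)
    also have "\<dots> \<le> 2 / L * (b n / real (Suc n))"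
      using elim L by (intro mult_left_mono divide_right_mono) auto
    finally show ?case by simp
  qed
  then have "summable (\<lambda>n. inverse (real (Suc n)))"
    by (rule summable_comparison_test_ev) (intro summable_mult summable)
  then show False
    using not_summable_harmonic summable_Suc_iff by blast
qed

abbreviation esym_harm :: "nat \<Rightarrow> nat \<Rightarrow> real" where
  "esym_harm \<equiv> esym (\<lambda>i. 1 / real i)"

lemma esym_harm_nonneg: "0 \<le> esym_harm k m"
  by (rule esym_nonneg) simp

lemma Pn_gen_harm: "Pn k (\<lambda>r. gen_harm r m) = esym_harm k m"
proof -
  have "(\<lambda>r. gen_harm r m) = (\<lambda>r. psum (\<lambda>i. 1 / real i) r m)"
    by (simp add: fun_eq_iff gen_harm_def psum_def power_one_over)
  then show ?thesis
    by (simp add: Pn_psum_eq_esym)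
qed

lemma esym_harm_pochhammer_step:
  fixes k r n :: nat
  defines "b \<equiv> \<lambda>n. esym_harm (Suc k) n / pochhammer (real (Suc (Suc n))) r"
  shows "real r * (esym_harm (Suc k) (Suc n) / pochhammer (real (Suc (Suc n))) (Suc r))
    = esym_harm k n / pochhammer (real (Suc n)) (Suc r) + b n - b (Suc n)"
proof -
  have split: "pochhammer (real (Suc n)) (Suc r) = real (Suc n) * pochhammer (real (Suc (Suc n))) r"
    by (simp add: pochhammer_rec add.commute)
  have "real r * (esym_harm (Suc k) (Suc n) / pochhammer (real (Suc (Suc n))) (Suc r))
      = esym_harm (Suc k) (Suc n) * (real r / pochhammer (real (Suc (Suc n))) (Suc r))"
    by simp
  also have "real r / pochhammer (real (Suc (Suc n))) (Suc r)
      = 1 / pochhammer (real (Suc (Suc n))) r - 1 / pochhammer (real (Suc (Suc (Suc n)))) r"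
    using inverse_pochhammer_diff[of "real (Suc (Suc n))" r] by (simp add: add_ac)
  also have "esym_harm (Suc k) (Suc n)
      * (1 / pochhammer (real (Suc (Suc n))) r - 1 / pochhammer (real (Suc (Suc (Suc n)))) r)
      = esym_harm (Suc k) (Suc n) / pochhammer (real (Suc (Suc n))) r - b (Suc n)"
    unfolding b_def by (simp only: right_diff_distrib times_divide_eq_right mult_1_right)
  also have "esym_harm (Suc k) (Suc n) / pochhammer (real (Suc (Suc n))) r
      = b n + esym_harm k n / pochhammer (real (Suc n)) (Suc r)"
    unfolding split b_def by (simp add: add_divide_distrib)
  finally show ?thesis
    by simp
qed

lemma inverse_pochhammer_sums:
  assumes "1 \<le> r"
  shows "(\<lambda>n. 1 / pochhammer (real (Suc n)) (Suc r)) sums (1 / (fact r * real r))"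
proof -
  have "(\<lambda>n. 1 / pochhammer (real (Suc n)) r - 1 / pochhammer (real (Suc (Suc n))) r)
      sums (1 / pochhammer (real (Suc 0)) r - 0)"
    by (rule telescope_sums'[OF inverse_pochhammer_tendsto_zero[OF assms]])
  then have "(\<lambda>n. (1 / pochhammer (real (Suc n)) r - 1 / pochhammer (real (Suc (Suc n))) r) / real r)
      sums (1 / (fact r * real r))"
    using sums_divide by (fastforce simp: pochhammer_fact)
  moreover have "(1 / pochhammer (real (Suc n)) r - 1 / pochhammer (real (Suc (Suc n))) r) / real r
      = 1 / pochhammer (real (Suc n)) (Suc r)" for n
    using inverse_pochhammer_diff[of "real (Suc n)" r] assms by (simp add: add.commute)
  ultimately show ?thesis
    by simp
qed

lemma esym_harm_pochhammer_sums_Suc: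
  assumes r: "1 \<le> r"
    and sums: "(\<lambda>n. esym_harm k n / pochhammer (real (Suc n)) (Suc r)) sums U"
  shows "(\<lambda>n. esym_harm (Suc k) n / pochhammer (real (Suc n)) (Suc r)) sums (U / real r)"
proof -
  define u where "u k n = esym_harm k n / pochhammer (real (Suc n)) (Suc r)" for k n
  define b where "b n = esym_harm (Suc k) n / pochhammer (real (Suc (Suc n))) r" for n
  have u_nonneg: "0 \<le> u k n" for k n
    by (simp add: u_def esym_harm_nonneg pochhammer_nonneg)
  have b_nonneg: "0 \<le> b n" for n
    by (simp add: b_def esym_harm_nonneg pochhammer_nonneg)
  have partial: "real r * (\<Sum>n<N. u (Suc k) (Suc n)) = (\<Sum>n<N. u k n) - b N" for N
  proof (induction N)
    case (Suc N)
    have "real r * u (Suc k) (Suc N) = u k N + b N - b (Suc N)"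
      unfolding u_def b_def by (rule esym_harm_pochhammer_step)
    with Suc.IH show ?case
      by (simp add: distrib_left)
  qed (simp add: b_def)
  have u_sums: "u k sums U"
    using sums by (simp add: u_def[abs_def])
  have bounded: "(\<Sum>n<N. u (Suc k) (Suc n)) \<le> U / real r" for N
  proof -
    have "(\<Sum>n<N. u k n) \<le> U"
      using u_sums u_nonneg by (auto simp: sums_iff intro!: sum_le_suminf)
    then have "real r * (\<Sum>n<N. u (Suc k) (Suc n)) \<le> U"
      unfolding partial using b_nonneg[of N] by linarith
    then show ?thesis
      using r by (simp add: field_simps)
  qed
  have summable: "summable (\<lambda>n. u (Suc k) (Suc n))"
    by (intro bounded_imp_summable[of _ "U / real r"] u_nonneg)
      (simp only: lessThan_Suc_atMost[symmetric] bounded)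
  define U' where "U' = (\<Sum>n. u (Suc k) (Suc n))"
  have "(\<lambda>N. (\<Sum>n<N. u k n) - real r * (\<Sum>n<N. u (Suc k) (Suc n))) \<longlonglongrightarrow> U - real r * U'"
    using u_sums summable unfolding U'_def sums_def
    by (intro tendsto_intros) (auto intro: summable_LIMSEQ)
  then have "b \<longlonglongrightarrow> U - real r * U'"
    by (simp add: partial)
  moreover have "summable (\<lambda>n. b n / real (Suc n))"
  proof -
    have "b n / real (Suc n) = u (Suc k) n" for n
      by (simp add: b_def u_def pochhammer_rec add.commute)
    then show ?thesis
      using summable by (simp add: summable_Suc_iff[of "u (Suc k)"])
  qed
  ultimately have "U - real r * U' = 0"
    by (rule tendsto_zero_if_summable_divide_Suc[where b = b, OF b_nonneg])
  then have "(\<lambda>n. u (Suc k) (Suc n)) sums (U / real r)"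
    using summable r unfolding U'_def by (simp add: summable_sums field_simps)
  moreover have "u (Suc k) 0 = 0"
    by (simp add: u_def)
  ultimately have "u (Suc k) sums (U / real r)"
    using sums_Suc_iff[of "u (Suc k)"] by simp
  then show ?thesis
    by (simp add: u_def[abs_def])
qed

lemma esym_harm_pochhammer_sums:
  assumes "1 \<le> r"
  shows "(\<lambda>n. esym_harm k n / pochhammer (real (Suc n)) (Suc r)) sums (1 / (fact r * real r ^ Suc k))"
proof (induction k)
  case 0
  show ?case
    using inverse_pochhammer_sums[OF assms] by simp
next
  case (Suc k)
  show ?case
    using esym_harm_pochhammer_sums_Suc[OF assms Suc] by (simp add: field_simps)
qed

lemma inverse_pochhammer_Suc_diff:
  fixes a :: real
  assumes "0 < a"
  shows "1 / pochhammer a q - real q / pochhammer a (Suc q) = 1 / pochhammer (a + 1) q"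
  using inverse_pochhammer_diff[OF assms, of q] by simp

lemma inverse_pochhammer_le:
  fixes a :: real
  assumes "1 \<le> a"
  shows "1 / pochhammer a q \<le> (real q + 1) / pochhammer (a + 1) q"
proof -
  have pos: "0 < pochhammer (a + 1) q"
    using assms by (simp add: pochhammer_pos)
  have "real q / pochhammer a (Suc q) = real q / (a * pochhammer (a + 1) q)"
    by (simp add: pochhammer_rec)
  also have "\<dots> \<le> real q / pochhammer (a + 1) q"
    using assms pos by (intro divide_left_mono) (auto intro: mult_le_cancel_right1[THEN iffD2])
  finally show ?thesis
    using inverse_pochhammer_Suc_diff[of a q] assms by (simp add: add_divide_distrib)
qed

lemma fact_divide_pochhammer_antimono:
  fixes a :: real
  assumes "1 \<le> a" and "p \<le> q"
  shows "fact q / pochhammer a q \<le> fact p / pochhammer a p"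
  using assms(2)
proof (induction q rule: dec_induct)
  case (step q)
  have "fact (Suc q) / pochhammer a (Suc q) = fact q / pochhammer a q * (real (Suc q) / (a + real q))"
    by (simp add: pochhammer_Suc fact_Suc)
  also have "\<dots> \<le> fact q / pochhammer a q"
    using assms(1) by (intro mult_left_le) (auto simp: pochhammer_nonneg)
  finally show ?case
    using step.IH by simp
qed simp

definition esym_harm_series :: "nat \<Rightarrow> nat \<Rightarrow> real" where
  "esym_harm_series k q = (\<Sum>n. esym_harm k (Suc n) / pochhammer (real (Suc n)) q)"

lemma esym_harm_pochhammer_shifted_sums:
  assumes "1 \<le> k" and "2 \<le> q"
  shows "(\<lambda>n. esym_harm k (Suc n) / pochhammer (real (Suc (Suc n))) q)
    sums (1 / (fact (q - 1) * real (q - 1) ^ Suc k))"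
proof -
  obtain r where r: "q = Suc r" "1 \<le> r"
    using assms(2) by (cases q) auto
  have "esym_harm k 0 = 0"
    using assms(1) by (simp add: esym_0_right)
  then show ?thesis
    using esym_harm_pochhammer_sums[OF r(2), of k] r(1)
      sums_Suc_iff[of "\<lambda>n. esym_harm k n / pochhammer (real (Suc n)) (Suc r)"] by simp
qed

lemma summable_esym_harm_pochhammer:
  assumes "1 \<le> k" and "2 \<le> q"
  shows "summable (\<lambda>n. esym_harm k (Suc n) / pochhammer (real (Suc n)) q)"
proof (rule summable_comparison_test)
  show "summable (\<lambda>n. (real q + 1) * (esym_harm k (Suc n) / pochhammer (real (Suc (Suc n))) q))"
    using esym_harm_pochhammer_shifted_sums[OF assms] by (intro summable_mult) (simp add: sums_iff)
  have "esym_harm k (Suc n) * (1 / pochhammer (real (Suc n)) q)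
      \<le> esym_harm k (Suc n) * ((real q + 1) / pochhammer (real (Suc n) + 1) q)" for n
    by (intro mult_left_mono inverse_pochhammer_le esym_harm_nonneg) simp
  then show "\<exists>N. \<forall>n\<ge>N. norm (esym_harm k (Suc n) / pochhammer (real (Suc n)) q)
      \<le> (real q + 1) * (esym_harm k (Suc n) / pochhammer (real (Suc (Suc n))) q)"
    by (auto simp: esym_harm_nonneg pochhammer_nonneg ac_simps)
qed

lemma esym_harm_series_diff:
  assumes "1 \<le> k" and "2 \<le> q"
  shows "fact (q - 1) * esym_harm_series k q - fact q * esym_harm_series k (Suc q)
    = 1 / real (q - 1) ^ Suc k"
proof -
  let ?t = "\<lambda>q n. esym_harm k (Suc n) / pochhammer (real (Suc n)) q"
  have "?t q n - real q * ?t (Suc q) n = esym_harm k (Suc n) / pochhammer (real (Suc (Suc n))) q" for n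
    using arg_cong[where f = "\<lambda>x. esym_harm k (Suc n) * x",
        OF inverse_pochhammer_Suc_diff[of "real (Suc n)" q]]
    by (simp add: right_diff_distrib mult.commute)
  then have "(\<lambda>n. ?t q n - real q * ?t (Suc q) n) sums (1 / (fact (q - 1) * real (q - 1) ^ Suc k))"
    using esym_harm_pochhammer_shifted_sums[OF assms] by simp
  moreover have "(\<lambda>n. ?t q n - real q * ?t (Suc q) n)
      sums (esym_harm_series k q - real q * esym_harm_series k (Suc q))"
    unfolding esym_harm_series_def using assms
    by (intro sums_diff sums_mult summable_sums summable_esym_harm_pochhammer) auto
  ultimately have "esym_harm_series k q - real q * esym_harm_series k (Suc q)
      = 1 / (fact (q - 1) * real (q - 1) ^ Suc k)"
    by (rule sums_unique2[symmetric])
  moreover have "(fact q :: real) = real q * fact (q - 1)"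
    using assms(2) by (simp add: fact_reduce)
  ultimately show ?thesis
    by (simp add: field_simps)
qed

lemma esym_harm_series_tendsto_zero:
  assumes "1 \<le> k"
  shows "(\<lambda>q. fact (q - 1) * esym_harm_series k q) \<longlonglongrightarrow> 0"
proof (rule tendsto_sandwich[of "\<lambda>_. 0" _ _ "\<lambda>q. 6 * esym_harm_series k 3 / real q"])
  let ?t = "\<lambda>q n. esym_harm k (Suc n) / pochhammer (real (Suc n)) q"
  have summable: "summable (?t q)" if "2 \<le> q" for q
    using summable_esym_harm_pochhammer[OF assms that] .
  show "\<forall>\<^sub>F q in sequentially. 0 \<le> fact (q - 1) * esym_harm_series k q"
    unfolding esym_harm_series_def
    by (intro eventually_sequentiallyI[of 2] mult_nonneg_nonneg suminf_nonneg summable)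
      (auto simp: esym_harm_nonneg pochhammer_nonneg)
  have "fact (q - 1) * esym_harm_series k q \<le> 6 * esym_harm_series k 3 / real q" if q: "3 \<le> q" for q
  proof -
    have "fact (q - 1) * ?t q n \<le> 6 / real q * ?t 3 n" for n
    proof -
      have "(fact q :: real) = real q * fact (q - 1)"
        using q by (simp add: fact_reduce)
      then have "fact (q - 1) * ?t q n
          = esym_harm k (Suc n) * (fact q / pochhammer (real (Suc n)) q) / real q"
        using q by (simp add: field_simps)
      also have "\<dots> \<le> esym_harm k (Suc n) * (fact 3 / pochhammer (real (Suc n)) 3) / real q"
        using q
        by (intro divide_right_mono mult_left_mono fact_divide_pochhammer_antimono esym_harm_nonneg)
          auto
      also have "\<dots> = 6 / real q * ?t 3 n"
        by (simp add: fact_numeral mult.commute)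
      finally show ?thesis .
    qed
    then have "(\<Sum>n. fact (q - 1) * ?t q n) \<le> (\<Sum>n. 6 / real q * ?t 3 n)"
      using q by (intro suminf_le summable_mult summable) auto
    moreover have "(\<Sum>n. fact (q - 1) * ?t q n) = fact (q - 1) * esym_harm_series k q"
      "(\<Sum>n. 6 / real q * ?t 3 n) = 6 / real q * esym_harm_series k 3"
      unfolding esym_harm_series_def using q by (intro suminf_mult summable; simp)+
    ultimately show ?thesis
      by simp
  qed
  then show "\<forall>\<^sub>F q in sequentially.
      fact (q - 1) * esym_harm_series k q \<le> 6 * esym_harm_series k 3 / real q"
    by (intro eventually_sequentiallyI[of 3])
qed (auto intro: lim_const_over_n)

lemma esym_harm_series_sums:
  assumes "1 \<le> k" and "2 \<le> q"
  shows "(\<lambda>i. 1 / real (i + q - 1) ^ Suc k) sums (fact (q - 1) * esym_harm_series k q)"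
proof -
  have "(\<lambda>i. fact (i + q - 1) * esym_harm_series k (i + q)) \<longlonglongrightarrow> 0"
    using LIMSEQ_ignore_initial_segment[OF esym_harm_series_tendsto_zero[OF assms(1)], of q] by simp
  then have "(\<lambda>i. fact (i + q - 1) * esym_harm_series k (i + q)
      - fact (Suc i + q - 1) * esym_harm_series k (Suc i + q))
      sums (fact (q - 1) * esym_harm_series k q)"
    using telescope_sums' by fastforce
  moreover have "fact (i + q - 1) * esym_harm_series k (i + q)
      - fact (Suc i + q - 1) * esym_harm_series k (Suc i + q)
      = 1 / real (i + q - 1) ^ Suc k" for i
    using esym_harm_series_diff[OF assms(1), of "i + q"] assms(2) by simp
  ultimately show ?thesis
    by simp
qed

lemma fact_mult_esym_harm_series:
  assumes "1 \<le> k" and "2 \<le> q"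
  shows "fact (q - 1) * esym_harm_series k q = zeta_nat (k + 1) - (\<Sum>j=1..q-2. 1 / real j ^ (k + 1))"
proof -
  define f :: "nat \<Rightarrow> real" where "f = (\<lambda>j. 1 / real (Suc j) ^ (k + 1))"
  have "f sums (fact 1 * esym_harm_series k 2)"
    using esym_harm_series_sums[OF assms(1), of 2] by (simp add: f_def)
  then have "zeta_nat (k + 1) = (\<Sum>i. f (i + (q - 2))) + (\<Sum>i<q - 2. f i)"
    unfolding zeta_nat_def f_def[symmetric] by (intro suminf_split_initial_segment) (simp add: sums_iff)
  moreover have "(\<lambda>i. f (i + (q - 2))) sums (fact (q - 1) * esym_harm_series k q)"
    using esym_harm_series_sums[OF assms] assms(2) by (simp add: f_def Suc_diff_le)
  moreover have "(\<Sum>j=1..q-2. 1 / real j ^ (k + 1)) = (\<Sum>i<q - 2. f i)"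
    unfolding One_nat_def sum.atLeast1_atMost_eq by (simp add: f_def)
  ultimately show ?thesis
    by (simp add: sums_iff)
qed

theorem mainTheorem7:
  fixes k q :: nat
  assumes "k \<ge> 1" and "q \<ge> 2"
  shows "(\<lambda>n. Pn k (\<lambda>r. gen_harm r (Suc n)) / (\<Prod>i<q. real (Suc n + i)))
           sums (1 / fact (q - 1) * (zeta_nat (k + 1) - (\<Sum>j=1..q-2. 1 / (real j) ^ (k + 1))))"
proof -
  have "(\<lambda>n. Pn k (\<lambda>r. gen_harm r (Suc n)) / (\<Prod>i<q. real (Suc n + i))) sums esym_harm_series k q"
    unfolding esym_harm_series_def Pn_gen_harm
    using summable_esym_harm_pochhammer[OF assms]
    by (simp add: pochhammer_prod atLeast0LessThan add_ac summable_sums)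
  moreover have "esym_harm_series k q
      = 1 / fact (q - 1) * (zeta_nat (k + 1) - (\<Sum>j=1..q-2. 1 / (real j) ^ (k + 1)))"
    using fact_mult_esym_harm_series[OF assms] by (simp add: field_simps)
  ultimately show ?thesis
    by (simp only:)
qed

end
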